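(* Let $C$ be a nonempty finite set of group indices, where each group $i\in C$ has $N_i$ users (a positive integer) with utility $\theta_i\ln(1+s)$, the $\theta_i>0$ being distinct with $\theta_i>\theta_{i'}$ whenever $i<i'$, and let $s^C>0$ be an amount of resource. Consider the single-price problem restricted to $C$: maximize $p\sum_{i\in C}n_is_i$ over $p>0$ and $n_i\in\{0,\dots,N_i\}$, subject to $s_i=(\theta_i/p-1)^+$ for $i\in C$ and $\sum_{i\in C}n_is_i\le s^C$. For $c\in C$ let $p_C(c)=\frac{\sum_{i\in C,i\le c}N_i\theta_i}{s^C+\sum_{i\in C,i\le c}N_i}$, let $K=\max\{c\in C:\theta_c>p_C(c)\}$, and set $N^C=\sum_{i\in C,i\le K}N_i$, $\theta^C=\frac{1}{N^C}\sum_{i\in C,i\le K}N_i\theta_i$. Then the optimal value of this problem equals $\frac{s^C N^C\theta^C}{s^C+N^C}$, which is the optimal single-price revenue, with resource $s^C$, of a single group consisting of $N^C$ users each with utility $\theta^C\ln(1+s)$.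
   Context: A user with utility $\theta\ln(1+s)$ facing unit price $p$ demands $(\theta/p-1)^+$, where $(x)^+=\max(x,0)$. *)

theory Defs
  imports Complex_Main
begin

text \<open>Demand of a user with utility theta * ln(1+s) at unit price p: (theta/p - 1)^+.\<close>
definition demand :: "real \<Rightarrow> real \<Rightarrow> real" where
  "demand \<theta> p = max (\<theta> / p - 1) 0"

definition sp_feasible ::
  "nat set \<Rightarrow> (nat \<Rightarrow> nat) \<Rightarrow> (nat \<Rightarrow> real) \<Rightarrow> real \<Rightarrow> real \<Rightarrow> (nat \<Rightarrow> nat) \<Rightarrow> bool" where
  "sp_feasible C N \<theta> S p n \<longleftrightarrow>
     p > 0 \<and> (\<forall>i\<in>C. n i \<le> N i) \<and> (\<Sum>i\<in>C. real (n i) * demand (\<theta> i) p) \<le> S"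

definition sp_revenue :: "nat set \<Rightarrow> (nat \<Rightarrow> real) \<Rightarrow> real \<Rightarrow> (nat \<Rightarrow> nat) \<Rightarrow> real" where
  "sp_revenue C \<theta> p n = p * (\<Sum>i\<in>C. real (n i) * demand (\<theta> i) p)"

definition sp_opt_value ::
  "nat set \<Rightarrow> (nat \<Rightarrow> nat) \<Rightarrow> (nat \<Rightarrow> real) \<Rightarrow> real \<Rightarrow> real \<Rightarrow> bool" where
  "sp_opt_value C N \<theta> S v \<longleftrightarrow>
     (\<exists>p n. sp_feasible C N \<theta> S p n \<and> sp_revenue C \<theta> p n = v) \<and>
     (\<forall>p n. sp_feasible C N \<theta> S p n \<longrightarrow> sp_revenue C \<theta> p n \<le> v)"

definition pC :: "nat set \<Rightarrow> (nat \<Rightarrow> nat) \<Rightarrow> (nat \<Rightarrow> real) \<Rightarrow> real \<Rightarrow> nat \<Rightarrow> real" where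
  "pC C N \<theta> S c = (\<Sum>i\<in>{i\<in>C. i \<le> c}. real (N i) * \<theta> i) / (S + (\<Sum>i\<in>{i\<in>C. i \<le> c}. real (N i)))"

end

theory Submission
  imports Defs
begin

text \<open>
  Let \<open>D\<close> be the groups up to the cutoff \<open>K\<close> and \<open>P\<close> the price \<open>p\<^sub>C(K)\<close>. The definition of
  \<open>K\<close> forces every group in \<open>D\<close> to value the resource above \<open>P\<close> and every other group to value
  it at most \<open>P\<close>: for the first group \<open>c\<close> after \<open>K\<close>, \<open>\<theta>\<^sub>c \<le> p\<^sub>C(c)\<close> and \<open>p\<^sub>C(c)\<close> is a mediant of
  \<open>P\<close> and \<open>\<theta>\<^sub>c\<close>. Hence at price \<open>P\<close> with all users served, the total demand is exactly \<open>s\<^sup>C\<close>,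
  so \<open>(P, N)\<close> earns \<open>s\<^sup>C P\<close>. No feasible point earns more: a lower price sells at most \<open>s\<^sup>C\<close> units
  more cheaply, and at a higher price the revenue \<open>\<Sum> n\<^sub>i (\<theta>\<^sub>i - p)\<^sup>+\<close> is dominated by
  \<open>\<Sum> N\<^sub>i (\<theta>\<^sub>i - P)\<^sup>+ = s\<^sup>C P\<close>. The single aggregated group has the same clearing price.
\<close>

lemma mult_demand: "p > 0 \<Longrightarrow> p * demand \<theta> p = max (\<theta> - p) 0"
  unfolding demand_def by (auto simp: max_def field_simps)

lemma demand_nonneg: "demand \<theta> p \<ge> 0"
  unfolding demand_def by simp

lemma sp_revenue_eq_surplus:
  assumes "p > 0"
  shows "sp_revenue C \<theta> p n = (\<Sum>i\<in>C. real (n i) * max (\<theta> i - p) 0)"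
  unfolding sp_revenue_def sum_distrib_left
  by (rule sum.cong) (use mult_demand[OF assms] in \<open>auto simp: mult.left_commute\<close>)

lemma le_mediant_iff:
  fixes a b n x :: real
  assumes "b > 0" and "n \<ge> 0"
  shows "x \<le> (a + n * x) / (b + n) \<longleftrightarrow> x \<le> a / b"
  using assms by (simp add: field_simps)

lemma sp_revenue_le_clearing:
  assumes P: "P > 0"
    and clears: "(\<Sum>i\<in>C. real (N i) * demand (\<theta> i) P) = S"
    and feasible: "sp_feasible C N \<theta> S p n"
  shows "sp_revenue C \<theta> p n \<le> S * P"
proof -
  from feasible have p: "p > 0" and n_le: "\<forall>i\<in>C. n i \<le> N i"
    and load: "(\<Sum>i\<in>C. real (n i) * demand (\<theta> i) p) \<le> S"
    unfolding sp_feasible_def by auto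
  have S: "S \<ge> 0"
    unfolding clears[symmetric] by (intro sum_nonneg mult_nonneg_nonneg) (simp_all add: demand_nonneg)
  show ?thesis
  proof (cases "p \<le> P")
    case True
    have "sp_revenue C \<theta> p n \<le> p * S"
      unfolding sp_revenue_def using load p by (simp add: mult_left_mono)
    also have "\<dots> \<le> P * S" using True S by (simp add: mult_right_mono)
    finally show ?thesis by (simp add: mult.commute)
  next
    case False
    have "sp_revenue C \<theta> p n = (\<Sum>i\<in>C. real (n i) * max (\<theta> i - p) 0)"
      using sp_revenue_eq_surplus[OF p] .
    also have "\<dots> \<le> (\<Sum>i\<in>C. real (N i) * max (\<theta> i - P) 0)"
      using n_le False by (intro sum_mono mult_mono) auto
    also have "\<dots> = sp_revenue C \<theta> P N"
      using sp_revenue_eq_surplus[OF P] by simp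
    also have "\<dots> = S * P"
      unfolding sp_revenue_def clears by simp
    finally show ?thesis .
  qed
qed

lemma sp_opt_value_clearing:
  assumes "P > 0" and "(\<Sum>i\<in>C. real (N i) * demand (\<theta> i) P) = S"
  shows "sp_opt_value C N \<theta> S (S * P)"
proof -
  have "sp_feasible C N \<theta> S P N" and "sp_revenue C \<theta> P N = S * P"
    using assms unfolding sp_feasible_def sp_revenue_def by simp_all
  then show ?thesis
    unfolding sp_opt_value_def using sp_revenue_le_clearing[OF assms] by blast
qed

lemma total_demand_clearing:
  assumes fin: "finite C" and DC: "D \<subseteq> C" and P: "P > 0"
    and above: "\<forall>i\<in>D. \<theta> i > P" and below: "\<forall>i\<in>C - D. \<theta> i \<le> P"
    and price: "P * (S + (\<Sum>i\<in>D. real (N i))) = (\<Sum>i\<in>D. real (N i) * \<theta> i)"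
  shows "(\<Sum>i\<in>C. real (N i) * demand (\<theta> i) P) = S"
proof -
  have "(\<Sum>i\<in>C. real (N i) * demand (\<theta> i) P) = (\<Sum>i\<in>D. real (N i) * demand (\<theta> i) P)"
    using below P by (intro sum.mono_neutral_right[OF fin DC]) (auto simp: demand_def)
  also have "P * \<dots> = (\<Sum>i\<in>D. real (N i) * (\<theta> i - P))"
    unfolding sum_distrib_left
    by (rule sum.cong) (use above mult_demand[OF P] in \<open>auto simp: mult.left_commute\<close>)
  also have "\<dots> = P * S"
    using price by (simp add: right_diff_distrib sum_subtractf sum_distrib_left algebra_simps)
  finally show ?thesis using P by simp
qed

lemma single_group_opt_value:
  assumes S: "S > 0" and M: "M > 0" and t: "t > 0"
  shows "sp_opt_value {0} (\<lambda>_. M) (\<lambda>_. t) S (S * real M * t / (S + real M))"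
proof -
  define P where "P = real M * t / (S + real M)"
  have SM: "S + real M > 0" using S by simp
  have P: "P > 0" using SM M t unfolding P_def by simp
  have "real M * t < t * (S + real M)" using S t by (simp add: distrib_left)
  then have "P < t" unfolding P_def using SM by (simp add: pos_divide_less_eq)
  moreover have "P * (S + real M) = real M * t" using SM unfolding P_def by simp
  ultimately have "real M * demand t P = S"
    using total_demand_clearing[of "{0}" "{0}" P "\<lambda>_. t" S "\<lambda>_. M"] P by simp
  then have "sp_opt_value {0} (\<lambda>_. M) (\<lambda>_. t) S (S * P)"
    using sp_opt_value_clearing[OF P, where C = "{0}" and N = "\<lambda>_. M" and \<theta> = "\<lambda>_. t"] by simp
  then show ?thesis unfolding P_def by (simp add: mult.assoc)
qed

locale user_groups =
  fixes C :: "nat set" and N :: "nat \<Rightarrow> nat" and \<theta> :: "nat \<Rightarrow> real" and S :: real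
  assumes finite_groups: "finite C" and groups_nonempty: "C \<noteq> {}"
    and N_pos: "\<And>i. i \<in> C \<Longrightarrow> N i > 0"
    and \<theta>_pos: "\<And>i. i \<in> C \<Longrightarrow> \<theta> i > 0"
    and \<theta>_decreasing: "\<And>i i'. i \<in> C \<Longrightarrow> i' \<in> C \<Longrightarrow> i < i' \<Longrightarrow> \<theta> i' < \<theta> i"
    and resource_pos: "S > 0"
begin

definition cutoff :: nat where
  "cutoff = Max {c\<in>C. \<theta> c > pC C N \<theta> S c}"

definition buyers :: "nat set" where
  "buyers = {i\<in>C. i \<le> cutoff}"

definition clearing_price :: real where
  "clearing_price = pC C N \<theta> S cutoff"

lemma clearing_price_eq:
  "clearing_price = (\<Sum>i\<in>buyers. real (N i) * \<theta> i) / (S + (\<Sum>i\<in>buyers. real (N i)))"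
  unfolding clearing_price_def pC_def buyers_def ..

lemma finite_buyers: "finite buyers"
  unfolding buyers_def using finite_groups by simp

lemma cutoff_above_price: "cutoff \<in> C" "\<theta> cutoff > clearing_price"
proof -
  define m where "m = Min C"
  have m: "m \<in> C" using finite_groups groups_nonempty unfolding m_def by simp
  have "{i\<in>C. i \<le> m} = {m}"
    using finite_groups m unfolding m_def by (auto intro: antisym)
  then have "pC C N \<theta> S m = real (N m) * \<theta> m / (S + real (N m))"
    unfolding pC_def by simp
  also have "\<dots> < \<theta> m"
    using N_pos[OF m] \<theta>_pos[OF m] resource_pos by (simp add: field_simps)
  finally have "m \<in> {c\<in>C. \<theta> c > pC C N \<theta> S c}" using m by simp
  then have "cutoff \<in> {c\<in>C. \<theta> c > pC C N \<theta> S c}"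
    unfolding cutoff_def using finite_groups by (intro Max_in) auto
  then show "cutoff \<in> C" "\<theta> cutoff > clearing_price"
    unfolding clearing_price_def by auto
qed

lemma cutoff_in_buyers: "cutoff \<in> buyers"
  unfolding buyers_def using cutoff_above_price by simp

lemma buyer_weight_pos: "(\<Sum>i\<in>buyers. real (N i)) > 0"
  by (rule sum_pos2[OF finite_buyers cutoff_in_buyers])
    (use N_pos cutoff_above_price in \<open>auto simp: buyers_def\<close>)

lemma buyer_value_pos: "(\<Sum>i\<in>buyers. real (N i) * \<theta> i) > 0"
  by (rule sum_pos2[OF finite_buyers cutoff_in_buyers])
    (use N_pos \<theta>_pos cutoff_above_price in \<open>auto simp: buyers_def less_imp_le\<close>)

lemma clearing_price_pos: "clearing_price > 0"
  using buyer_weight_pos buyer_value_pos resource_pos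
  unfolding clearing_price_eq by simp

lemma buyer_above_price:
  assumes "i \<in> buyers"
  shows "\<theta> i > clearing_price"
proof (cases "i = cutoff")
  case False
  then have "\<theta> i > \<theta> cutoff"
    using assms cutoff_above_price \<theta>_decreasing unfolding buyers_def by auto
  then show ?thesis using cutoff_above_price by simp
qed (use cutoff_above_price in simp)

lemma nonbuyer_below_price:
  assumes i: "i \<in> C - buyers"
  shows "\<theta> i \<le> clearing_price"
proof -
  define c where "c = Min {j\<in>C. cutoff < j}"
  have i_later: "i \<in> {j\<in>C. cutoff < j}" using i unfolding buyers_def by auto
  have c_least: "c \<le> j" if "j \<in> C" "cutoff < j" for j
    unfolding c_def using that finite_groups by (intro Min_le) auto
  have "c \<in> {j\<in>C. cutoff < j}"
    unfolding c_def using i_later finite_groups by (intro Min_in) auto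
  then have c: "c \<in> C" "cutoff < c" "c \<le> i" using c_least i_later by auto
  have "{j\<in>C. j \<le> c} = insert c buyers"
    using c c_least unfolding buyers_def by (auto simp: not_le intro: antisym)
  moreover have "c \<notin> buyers" using c unfolding buyers_def by simp
  ultimately have pC_c: "pC C N \<theta> S c
      = ((\<Sum>i\<in>buyers. real (N i) * \<theta> i) + real (N c) * \<theta> c)
        / ((S + (\<Sum>i\<in>buyers. real (N i))) + real (N c))"
    unfolding pC_def using finite_buyers by (simp add: algebra_simps)
  have "\<theta> c \<le> pC C N \<theta> S c"
  proof (rule ccontr)
    assume "\<not> \<theta> c \<le> pC C N \<theta> S c"
    then have "c \<le> cutoff"
      unfolding cutoff_def using c(1) finite_groups by (intro Max_ge) auto
    then show False using c(2) by simp
  qed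
  then have "\<theta> c \<le> clearing_price"
    unfolding pC_c clearing_price_eq
    using le_mediant_iff buyer_weight_pos resource_pos by (simp add: add_pos_pos)
  moreover have "\<theta> i \<le> \<theta> c"
    using c i \<theta>_decreasing by (cases "c = i") (auto intro: less_imp_le)
  ultimately show ?thesis by simp
qed

lemma sp_opt_value_clearing_price: "sp_opt_value C N \<theta> S (S * clearing_price)"
proof (rule sp_opt_value_clearing[OF clearing_price_pos total_demand_clearing])
  show "buyers \<subseteq> C" unfolding buyers_def by auto
  show "clearing_price * (S + (\<Sum>i\<in>buyers. real (N i))) = (\<Sum>i\<in>buyers. real (N i) * \<theta> i)"
    using buyer_weight_pos resource_pos unfolding clearing_price_eq by simp
qed (use finite_groups clearing_price_pos buyer_above_price nonbuyer_below_price in auto)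

end

theorem lemma1:
  fixes C :: "nat set" and N :: "nat \<Rightarrow> nat" and \<theta> :: "nat \<Rightarrow> real" and S :: real
  assumes "finite C" and "C \<noteq> {}"
    and "\<forall>i\<in>C. N i > 0"
    and "\<forall>i\<in>C. \<theta> i > 0"
    and "\<forall>i\<in>C. \<forall>i'\<in>C. i < i' \<longrightarrow> \<theta> i > \<theta> i'"
    and "S > 0"
  shows "let K = Max {c\<in>C. \<theta> c > pC C N \<theta> S c};
             NC = (\<Sum>i\<in>{i\<in>C. i \<le> K}. N i);
             \<theta>C = (1 / real NC) * (\<Sum>i\<in>{i\<in>C. i \<le> K}. real (N i) * \<theta> i)
         in sp_opt_value C N \<theta> S (S * real NC * \<theta>C / (S + real NC))
          \<and> sp_opt_value {0} (\<lambda>_. NC) (\<lambda>_. \<theta>C) S (S * real NC * \<theta>C / (S + real NC))"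
proof -
  interpret user_groups C N \<theta> S
    by unfold_locales (use assms in auto)
  define NC where "NC = (\<Sum>i\<in>buyers. N i)"
  define \<theta>C where "\<theta>C = (1 / real NC) * (\<Sum>i\<in>buyers. real (N i) * \<theta> i)"
  have NC: "real NC > 0" using buyer_weight_pos unfolding NC_def by simp
  have "S * real NC * \<theta>C / (S + real NC) = S * clearing_price"
    using NC unfolding \<theta>C_def clearing_price_eq NC_def by simp
  then have "sp_opt_value C N \<theta> S (S * real NC * \<theta>C / (S + real NC))"
    using sp_opt_value_clearing_price by simp
  moreover have "\<theta>C > 0" using NC buyer_value_pos unfolding \<theta>C_def by simp
  then have "sp_opt_value {0} (\<lambda>_. NC) (\<lambda>_. \<theta>C) S (S * real NC * \<theta>C / (S + real NC))"
    using single_group_opt_value resource_pos NC by simp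
  ultimately show ?thesis
    unfolding Let_def cutoff_def[symmetric] buyers_def[symmetric] NC_def \<theta>C_def by simp
qed

end
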